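(* Let $\kappa$ be an infinite cardinal and let $\mathscr{U}$ be a uniform ultrafilter over $\kappa$ with ${\rm Ch}(\mathscr{U})=\mu$. Then $\operatorname{cf}(\mu)>\omega$. Consequently $\operatorname{cf}(\mathfrak{u}_\kappa)>\omega$ for every infinite cardinal $\kappa$.
   Context: An ultrafilter $\mathscr{U}$ over $\kappa$ is uniform if every element of $\mathscr{U}$ has cardinality $\kappa$. A base for $\mathscr{U}$ is a collection $\mathcal{B}\subseteq\mathscr{U}$ such that every $A\in\mathscr{U}$ contains some $B\in\mathcal{B}$; ${\rm Ch}(\mathscr{U})$ is the minimal cardinality of a base for $\mathscr{U}$. The ultrafilter number $\mathfrak{u}_\kappa$ is the minimum of ${\rm Ch}(\mathscr{U})$ over all uniform ultrafilters $\mathscr{U}$ over $\kappa$. *)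

theory Defs
  imports Main
begin

text \<open>An ultrafilter over the set K (K plays the role of the cardinal kappa).\<close>
definition ultrafilter_on :: "'a set \<Rightarrow> 'a set set \<Rightarrow> bool" where
  "ultrafilter_on K U \<longleftrightarrow>
     U \<subseteq> Pow K \<and> K \<in> U \<and> {} \<notin> U \<and>
     (\<forall>A B. A \<in> U \<and> B \<in> U \<longrightarrow> A \<inter> B \<in> U) \<and>
     (\<forall>A B. A \<in> U \<and> A \<subseteq> B \<and> B \<subseteq> K \<longrightarrow> B \<in> U) \<and>
     (\<forall>A. A \<subseteq> K \<longrightarrow> A \<in> U \<or> K - A \<in> U)"

definition uniform_ultrafilter :: "'a set \<Rightarrow> 'a set set \<Rightarrow> bool" where
  "uniform_ultrafilter K U \<longleftrightarrow>
     ultrafilter_on K U \<and> (\<forall>A\<in>U. (card_of A, card_of K) \<in> ordIso)"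

definition is_base :: "'a set set \<Rightarrow> 'a set set \<Rightarrow> bool" where
  "is_base U B \<longleftrightarrow> B \<subseteq> U \<and> (\<forall>A\<in>U. \<exists>C\<in>B. C \<subseteq> A)"

definition Ch_is :: "'a set set \<Rightarrow> 'b rel \<Rightarrow> bool" where
  "Ch_is U \<mu> \<longleftrightarrow>
     (\<exists>B. is_base U B \<and> (card_of B, \<mu>) \<in> ordIso) \<and>
     (\<forall>B. is_base U B \<longrightarrow> (\<mu>, card_of B) \<in> ordLeq)"

definition u_number_is :: "'a set \<Rightarrow> 'b rel \<Rightarrow> bool" where
  "u_number_is K \<nu> \<longleftrightarrow>
     (\<exists>U. uniform_ultrafilter K U \<and> Ch_is U \<nu>) \<and>
     (\<forall>U B. uniform_ultrafilter K U \<and> is_base U B \<longrightarrow> (\<nu>, card_of B) \<in> ordLeq)"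

definition cf_gt_omega :: "'b rel \<Rightarrow> bool" where
  "cf_gt_omega r \<longleftrightarrow>
     (\<forall>C. C \<subseteq> Field r \<and> (\<forall>a\<in>Field r. \<exists>c\<in>C. (a, c) \<in> r)
          \<longrightarrow> (natLeq, card_of C) \<in> ordLess)"

end

theory Submission
  imports Defs "HOL-Library.Countable_Set_Type"
begin

text \<open>Suppose the cofinality of \<open>\<mu> = Ch(U)\<close> were countable. Then a base \<open>\<B>\<close> of size \<open>\<mu>\<close> is an
  increasing union of countably many subfamilies \<open>\<B>\<^sub>n\<close> of size \<open>< \<mu>\<close>, and by minimality of \<open>\<mu>\<close>
  no \<open>\<B>\<^sub>n\<close>, even restricted to a set \<open>A \<in> U\<close>, is a base. Hence we can choose pairwise disjoint
  \<open>U\<close>-small sets \<open>D\<^sub>n\<close> such that \<open>D\<^sub>n\<close> meets every member of \<open>\<B>\<^sub>n\<close>. The union \<open>Z\<close> of the \<open>D\<^sub>n\<close>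
  with even \<open>n\<close> splits every member of \<open>\<B>\<close>, so neither \<open>Z\<close> nor its complement contains
  a member of the base, contradicting that \<open>U\<close> is an ultrafilter. Uniformity enters only to make
  \<open>U\<close> non-principal, so that \<open>\<mu>\<close> is infinite.\<close>

unbundle cardinal_syntax

lemma card_of_under_ordLess:
  assumes r: "Card_order r" and inf: "infinite (Field r)" and a: "a \<in> Field r"
  shows "|under r a| <o r"
proof -
  have "|{a}| <o r"
    using finite_ordLess_infinite[OF card_of_Well_order card_order_on_well_order_on[OF r], of "{a}"] inf
    by (simp add: Field_card_of)
  then have "|underS r a \<union> {a}| <o r"
    using card_of_Un_ordLess_infinite_Field[OF inf r card_of_underS[OF r a]] by blast
  moreover have "under r a \<subseteq> underS r a \<union> {a}"
    unfolding under_def underS_def by blast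
  ultimately show ?thesis using card_of_mono1 ordLeq_ordLess_trans by blast
qed

lemma card_of_UN_atMost_ordLess:
  fixes A :: "nat \<Rightarrow> 'a set"
  assumes "Card_order r" and "infinite (Field r)" and "\<And>k. |A k| <o r"
  shows "|\<Union>k\<le>n. A k| <o r"
proof (induction n)
  case 0
  then show ?case using assms(3) by simp
next
  case (Suc n)
  have "(\<Union>k\<le>Suc n. A k) = (\<Union>k\<le>n. A k) \<union> A (Suc n)"
    by (auto simp: atMost_Suc)
  then show ?case
    using card_of_Un_ordLess_infinite_Field[OF assms(2,1) Suc assms(3)] by simp
qed

lemma countable_cofinal_imp_increasing_union_of_small:
  assumes r: "Card_order r" and inf: "infinite (Field r)"
    and C: "C \<subseteq> Field r" "\<forall>a\<in>Field r. \<exists>c\<in>C. (a, c) \<in> r" and "countable C"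
  obtains W :: "nat \<Rightarrow> 'a set"
  where "\<And>n. |W n| <o r" "mono W" "(\<Union>n. W n) = Field r"
proof
  define W where "W n = (\<Union>k\<le>n. under r (from_nat_into C k))" for n
  have "C \<noteq> {}" using C inf by (metis ex_in_conv finite.emptyI)
  then have CC: "from_nat_into C k \<in> C" for k by (rule from_nat_into)
  show "|W n| <o r" for n
    unfolding W_def using CC C(1)
    by (intro card_of_UN_atMost_ordLess[OF r inf] card_of_under_ordLess[OF r inf]) blast
  show "mono W"
    unfolding W_def by (intro monoI UN_mono) auto
  show "(\<Union>n. W n) = Field r"
  proof
    show "(\<Union>n. W n) \<subseteq> Field r"
      unfolding W_def under_def by (auto intro: FieldI1)
  next
    show "Field r \<subseteq> (\<Union>n. W n)"
    proof
      fix a assume "a \<in> Field r"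
      then obtain c where c: "c \<in> C" "(a, c) \<in> r" using C(2) by blast
      then have "from_nat_into C (to_nat_on C c) = c"
        using \<open>countable C\<close> by simp
      then have "a \<in> W (to_nat_on C c)" unfolding W_def under_def using c by force
      then show "a \<in> (\<Union>n. W n)" by blast
    qed
  qed
qed

lemma ultrafilter_onD:
  assumes "ultrafilter_on K U"
  shows ultrafilter_on_Pow: "U \<subseteq> Pow K"
    and ultrafilter_on_top: "K \<in> U"
    and ultrafilter_on_empty: "{} \<notin> U"
    and ultrafilter_on_Int: "\<And>A B. A \<in> U \<Longrightarrow> B \<in> U \<Longrightarrow> A \<inter> B \<in> U"
    and ultrafilter_on_mono: "\<And>A B. A \<in> U \<Longrightarrow> A \<subseteq> B \<Longrightarrow> B \<subseteq> K \<Longrightarrow> B \<in> U"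
    and ultrafilter_on_Diff: "\<And>E. E \<subseteq> K \<Longrightarrow> E \<notin> U \<Longrightarrow> K - E \<in> U"
  using assms unfolding ultrafilter_on_def by (elim conjE; blast)+

lemma ultrafilter_on_Un_notin:
  assumes uf: "ultrafilter_on K U" and "X \<subseteq> K" "Y \<subseteq> K" "X \<notin> U" "Y \<notin> U"
  shows "X \<union> Y \<notin> U"
proof
  assume "X \<union> Y \<in> U"
  moreover have "K - X \<in> U" using ultrafilter_on_Diff[OF uf] assms by blast
  ultimately have "(X \<union> Y) \<inter> (K - X) \<in> U" by (rule ultrafilter_on_Int[OF uf])
  then have "Y \<in> U" using ultrafilter_on_mono[OF uf] assms(3) by blast
  with assms show False by blast
qed

lemma ultrafilter_on_Inter:
  assumes uf: "ultrafilter_on K U" and "finite F" "F \<noteq> {}" "F \<subseteq> U"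
  shows "\<Inter>F \<in> U"
  using assms(2-4)
proof (induction F rule: finite_ne_induct)
  case (insert x F)
  then show ?case using ultrafilter_on_Int[OF uf] by auto
qed simp

lemma ultrafilter_on_base_infinite:
  assumes uf: "ultrafilter_on K U" and nonprincipal: "\<And>x. {x} \<notin> U" and B: "is_base U B"
  shows "infinite B"
proof
  assume "finite B"
  have "B \<noteq> {}" "B \<subseteq> U"
    using B ultrafilter_on_top[OF uf] unfolding is_base_def by blast+
  then have "\<Inter>B \<in> U" by (rule ultrafilter_on_Inter[OF uf \<open>finite B\<close>])
  moreover have "\<Inter>B \<noteq> {}" using \<open>\<Inter>B \<in> U\<close> ultrafilter_on_empty[OF uf] by auto
  ultimately obtain x where x: "x \<in> \<Inter>B" "x \<in> K"
    using ultrafilter_on_Pow[OF uf] by blast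
  then have "K - {x} \<in> U" using ultrafilter_on_Diff[OF uf] nonprincipal by blast
  then obtain C where "C \<in> B" "C \<subseteq> K - {x}" using B unfolding is_base_def by blast
  with x show False by blast
qed

lemma uniform_ultrafilter_singleton_notin:
  assumes "infinite K" and "uniform_ultrafilter K U"
  shows "{x} \<notin> U"
proof
  assume "{x} \<in> U"
  then have "|{x}| =o |K|" using assms(2) unfolding uniform_ultrafilter_def by blast
  then obtain h where "bij_betw h {x} K" using card_of_ordIso by blast
  with assms(1) show False using bij_betw_finite by blast
qed

lemma Ch_is_small_family_not_base:
  assumes "Ch_is U \<mu>" and "|F| <o \<mu>"
  shows "\<not> is_base U (f ` F)"
proof
  assume "is_base U (f ` F)"
  then have "\<mu> \<le>o |f ` F|" using assms(1) unfolding Ch_is_def by blast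
  also have "|f ` F| \<le>o |F|" by (rule card_of_image)
  finally show False using assms(2) not_ordLess_ordLeq by blast
qed

lemma ultrafilter_on_nonbase_restriction:
  assumes uf: "ultrafilter_on K U" and "F \<subseteq> U" "A \<in> U"
    and nonbase: "\<not> is_base U ((\<lambda>B. B \<inter> A) ` F)"
  obtains D where "D \<subseteq> A" "D \<notin> U" "\<And>B. B \<in> F \<Longrightarrow> B \<inter> D \<noteq> {}"
proof -
  have "(\<lambda>B. B \<inter> A) ` F \<subseteq> U" using assms(2,3) by (auto intro!: ultrafilter_on_Int[OF uf])
  then have "\<not> (\<forall>A'\<in>U. \<exists>C\<in>(\<lambda>B. B \<inter> A) ` F. C \<subseteq> A')"
    using nonbase unfolding is_base_def by simp
  then have "\<exists>A'\<in>U. \<forall>B\<in>F. \<not> B \<inter> A \<subseteq> A'" by auto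
  then obtain A' where A': "A' \<in> U" "\<And>B. B \<in> F \<Longrightarrow> \<not> B \<inter> A \<subseteq> A'" by blast
  show thesis
  proof (rule that[of "A - A'"])
    show "A - A' \<subseteq> A" by blast
    show "A - A' \<notin> U"
    proof
      assume "A - A' \<in> U"
      then have "(A - A') \<inter> A' \<in> U" using A'(1) by (rule ultrafilter_on_Int[OF uf])
      then show False using ultrafilter_on_empty[OF uf] by (simp add: Int_commute)
    qed
    show "B \<inter> (A - A') \<noteq> {}" if "B \<in> F" for B using A'(2)[OF that] by blast
  qed
qed

lemma ultrafilter_on_disjoint_transversals:
  fixes S :: "nat \<Rightarrow> 'a set set"
  assumes uf: "ultrafilter_on K U" and S: "\<And>n. S n \<subseteq> U"
    and nonbase: "\<And>n A. A \<in> U \<Longrightarrow> \<not> is_base U ((\<lambda>B. B \<inter> A) ` S n)"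
  obtains D where "\<And>n. D n \<subseteq> K" "\<And>m n. m \<noteq> n \<Longrightarrow> D m \<inter> D n = {}"
    "\<And>n B. B \<in> S n \<Longrightarrow> B \<inter> D n \<noteq> {}"
proof -
  have "\<exists>D. D \<subseteq> K - E \<and> D \<notin> U \<and> (\<forall>B\<in>S n. B \<inter> D \<noteq> {})"
    if "E \<subseteq> K" "E \<notin> U" for E n
  proof -
    have "K - E \<in> U" using ultrafilter_on_Diff[OF uf that] .
    then obtain D where "D \<subseteq> K - E" "D \<notin> U" "\<And>B. B \<in> S n \<Longrightarrow> B \<inter> D \<noteq> {}"
      using ultrafilter_on_nonbase_restriction[OF uf S _ nonbase] by blast
    then show ?thesis by blast
  qed
  then obtain next_piece where piece: "\<And>E n. E \<subseteq> K \<Longrightarrow> E \<notin> U \<Longrightarrow>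
      next_piece E n \<subseteq> K - E \<and> next_piece E n \<notin> U \<and> (\<forall>B\<in>S n. B \<inter> next_piece E n \<noteq> {})"
    by metis
  define T where "T = rec_nat {} (\<lambda>n T. T \<union> next_piece T n)"
  define D where "D n = next_piece (T n) n" for n
  have T_Suc: "T (Suc n) = T n \<union> D n" for n unfolding T_def D_def by simp
  have T_small: "T n \<subseteq> K \<and> T n \<notin> U" for n
  proof (induction n)
    case 0
    then show ?case using ultrafilter_on_empty[OF uf] unfolding T_def by simp
  next
    case (Suc n)
    then show ?case
      using piece[of "T n" n] ultrafilter_on_Un_notin[OF uf, of "T n" "D n"]
      unfolding T_Suc D_def by auto
  qed
  have D: "D n \<subseteq> K - T n \<and> (\<forall>B\<in>S n. B \<inter> D n \<noteq> {})" for n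
    using piece T_small unfolding D_def by blast
  have D_in_T: "D m \<subseteq> T n" if "m < n" for m n
    using that by (induction n) (auto simp: T_Suc less_Suc_eq)
  show thesis
  proof
    have "D m \<inter> D n = {}" if "m < n" for m n using D[of n] D_in_T[OF that] by blast
    then show "D m \<inter> D n = {}" if "m \<noteq> n" for m n
      using that by (metis Int_commute linorder_neqE_nat)
  qed (use D in blast)+
qed

theorem ultrafilter_on_base_not_increasing_union_of_nonbases:
  fixes S :: "nat \<Rightarrow> 'a set set"
  assumes uf: "ultrafilter_on K U" and base: "is_base U (\<Union>n. S n)" and "mono S"
    and nonbase: "\<And>n A. A \<in> U \<Longrightarrow> \<not> is_base U ((\<lambda>B. B \<inter> A) ` S n)"
  shows False
proof -
  have S: "S n \<subseteq> U" for n using base unfolding is_base_def by blast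
  have refines: "\<exists>m. \<exists>B\<in>S m. B \<subseteq> A" if "A \<in> U" for A
    using base that unfolding is_base_def by blast
  show False
  proof (rule ultrafilter_on_disjoint_transversals[of K U S, OF uf S nonbase])
    fix D assume DK: "\<And>n. D n \<subseteq> K" and disj: "\<And>m n. m \<noteq> n \<Longrightarrow> D m \<inter> D n = {}"
      and meets: "\<And>n B. B \<in> S n \<Longrightarrow> B \<inter> D n \<noteq> {}"
    have meets_later: "B \<inter> D n \<noteq> {}" if "B \<in> S m" "m \<le> n" for B m n
      using meets[of B n] monoD[OF \<open>mono S\<close> \<open>m \<le> n\<close>] that(1) by blast
    define Z where "Z = (\<Union>n\<in>{n. even n}. D n)"
    have "Z \<subseteq> K" unfolding Z_def using DK by blast
    then consider "Z \<in> U" | "K - Z \<in> U" using ultrafilter_on_Diff[OF uf] by blast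
    then show False
    proof cases
      case 1
      then obtain B m where B: "B \<in> S m" "B \<subseteq> Z" using refines by blast
      obtain y where y: "y \<in> B" "y \<in> D (2 * m + 1)"
        using meets_later[OF B(1), of "2 * m + 1"] by auto
      then obtain k where "even k" "y \<in> D k" using B(2) unfolding Z_def by blast
      moreover have "k \<noteq> 2 * m + 1" using \<open>even k\<close> by auto
      ultimately show False using disj[of k "2 * m + 1"] y(2) by blast
    next
      case 2
      then obtain B m where B: "B \<in> S m" "B \<subseteq> K - Z" using refines by blast
      obtain y where y: "y \<in> B" "y \<in> D (2 * m)" using meets_later[OF B(1), of "2 * m"] by auto
      then have "y \<in> Z" unfolding Z_def by (intro UN_I[of "2 * m"]) auto
      then show False using B(2) y(1) by blast
    qed
  qed
qed

theorem Ch_is_cf_gt_omega: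
  fixes K :: "'a set" and \<mu> :: "'b rel"
  assumes inf: "infinite K" and uniform: "uniform_ultrafilter K U"
    and \<mu>: "Card_order \<mu>" and ch: "Ch_is U \<mu>"
  shows "cf_gt_omega \<mu>"
  unfolding cf_gt_omega_def
proof (intro allI impI)
  fix C assume C: "C \<subseteq> Field \<mu> \<and> (\<forall>a\<in>Field \<mu>. \<exists>c\<in>C. (a, c) \<in> \<mu>)"
  show "natLeq <o |C|"
  proof (rule ccontr)
    assume "\<not> natLeq <o |C|"
    then have "countable C"
      using ordLess_or_ordLeq[OF natLeq_Well_order card_of_Well_order] countable_card_le_natLeq
      by blast
    have uf: "ultrafilter_on K U" using uniform unfolding uniform_ultrafilter_def by blast
    obtain B where B: "is_base U B" "|B| =o \<mu>" using ch unfolding Ch_is_def by blast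
    have "|Field \<mu>| =o |B|"
      using ordIso_transitive[OF card_of_Field_ordIso[OF \<mu>] ordIso_symmetric[OF B(2)]] .
    then obtain g where g: "bij_betw g (Field \<mu>) B" using card_of_ordIso by blast
    have "infinite (Field \<mu>)"
      using ultrafilter_on_base_infinite[OF uf uniform_ultrafilter_singleton_notin[OF inf uniform] B(1)]
        g bij_betw_finite by blast
    then obtain W :: "nat \<Rightarrow> 'b set"
      where W: "\<And>n. |W n| <o \<mu>" "mono W" "(\<Union>n. W n) = Field \<mu>"
      using countable_cofinal_imp_increasing_union_of_small[OF \<mu> _ _ _ \<open>countable C\<close>] C
      by blast
    define S where "S n = g ` W n" for n
    have "(\<Union>n. S n) = B" unfolding S_def using g W(3) unfolding bij_betw_def by blast
    then have "is_base U (\<Union>n. S n)" using B(1) by simp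
    moreover have "mono S" unfolding S_def using W(2) by (simp add: mono_def image_mono)
    moreover have "|S n| <o \<mu>" for n
      unfolding S_def using W(1) card_of_image ordLeq_ordLess_trans by blast
    ultimately show False
      using ultrafilter_on_base_not_increasing_union_of_nonbases[OF uf]
        Ch_is_small_family_not_base[OF ch] by blast
  qed
qed

theorem mainTheorem2:
  fixes K :: "'a set"
  assumes "infinite K"
  shows "(\<forall>U (\<mu> :: 'a set set rel).
            uniform_ultrafilter K U \<and> Card_order \<mu> \<and> Ch_is U \<mu> \<longrightarrow> cf_gt_omega \<mu>)
       \<and> (\<forall>\<nu> :: 'a set set rel.
            Card_order \<nu> \<and> u_number_is K \<nu> \<longrightarrow> cf_gt_omega \<nu>)"
  using Ch_is_cf_gt_omega[OF assms] unfolding u_number_is_def by blast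

end
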